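(* For every $\omega\in\{0,1\}^n$, the stabilization time of $\omega$ equals $\mathrm{Depth}(Y(\omega))$.
   Context: $\mathbb N=\{1,2,\dots\}$. A Young diagram is a finite down-closed set $Y\subseteq\mathbb N\times\mathbb N$ (i.e. $(i,j)\in Y$, $i'\le i$, $j'\le j$ imply $(i',j')\in Y$). For $\omega\in\{0,1\}^n$ with $U$ ones, $Y(\omega)=\{(i,j)\in\mathbb N\times\mathbb N: i\le n-U,\ j\le\text{the number of 1's of }\omega\text{ after the }i\text{-th 0 of }\omega\}$. For nonempty $Y$, $\mathrm{Depth}(Y)=\max\{i+j-1:(i,j)\in Y\}$; $\mathrm{Depth}(\emptyset)=0$. One step of the evolution replaces simultaneously every occurrence of the consecutive substring "01" by "10"; the stabilization time is the number of steps needed to reach a string of the form $1\cdots10\cdots0$. *)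

theory Defs
  imports Main
begin

text \<open>Binary strings \<omega> \<in> {0,1}^n are modelled as bool lists: True = 1, False = 0.\<close>

text \<open>One step: simultaneously replace every occurrence of 01 by 10.
  Occurrences of 01 never overlap, so a left-to-right scan realises it.\<close>
fun evo_step :: "bool list \<Rightarrow> bool list" where
  "evo_step (False # True # xs) = True # False # evo_step xs"
| "evo_step (x # xs) = x # evo_step xs"
| "evo_step [] = []"

definition is_stable :: "bool list \<Rightarrow> bool" where
  "is_stable w \<longleftrightarrow> (\<exists>a b. w = replicate a True @ replicate b False)"

definition stab_time :: "bool list \<Rightarrow> nat" where
  "stab_time w = (LEAST k. is_stable ((evo_step ^^ k) w))"

definition num_ones :: "bool list \<Rightarrow> nat" where
  "num_ones w = length (filter id w)"

text \<open>Number of 1's of w lying after the i-th 0 of w (positions p holding a 1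
  with at least i zeros strictly before p).\<close>
definition ones_after_zero :: "bool list \<Rightarrow> nat \<Rightarrow> nat" where
  "ones_after_zero w i =
     card {p. p < length w \<and> w ! p \<and> i \<le> card {q. q < p \<and> \<not> w ! q}}"

definition young_of :: "bool list \<Rightarrow> (nat \<times> nat) set" where
  "young_of w = {(i, j). 1 \<le> i \<and> i \<le> length w - num_ones w \<and>
                         1 \<le> j \<and> j \<le> ones_after_zero w i}"

definition Depth :: "(nat \<times> nat) set \<Rightarrow> nat" where
  "Depth Y = (if Y = {} then 0 else Max ((\<lambda>(i, j). i + j - 1) ` Y))"

end

theory Submission
  imports Defs
begin

(* Cut the word w between positions m-1 and m and give the cut the
   weight  cut_weight w m = (#0's left of the cut) + (#1's right of the cut).
   A cut is proper if both counts are positive.  One evolution step moves every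
   "01" to "10" and hence lowers the weight of a cut by 2 if it sits inside a
   "01" (an ascent) and leaves it unchanged otherwise.  A cut of maximal weight
   is always an ascent, and its two neighbours have weight one less and survive
   the step unchanged.  Consequently "all proper cuts have weight <= k + 1"
   holds after one step iff "all proper cuts have weight <= k + 2" held before
   (weights_bounded_evo_step).  Since w is stable iff it has no proper cut, w
   is stable after k steps iff all its proper cuts weigh <= k + 1.
   Finally, the corners (#0's left, #1's right) of proper cuts are cells of the
   Young diagram Y(w) dominating every other cell, so Depth (Y w) <= k holds
   under the very same condition; the theorem compares the two least k. *)

lemma evo_step_length [simp]: "length (evo_step w) = length w"
  by (induction w rule: evo_step.induct) auto

lemma evo_step_append:
  assumes "\<not> (xs \<noteq> [] \<and> ys \<noteq> [] \<and> \<not> last xs \<and> hd ys)"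
  shows "evo_step (xs @ ys) = evo_step xs @ evo_step ys"
  using assms
  apply (induction xs rule: evo_step.induct)
    apply (auto split: if_splits)
  subgoal for x by (cases ys; cases x) auto
  done

definition num_zeros :: "bool list \<Rightarrow> nat" where
  "num_zeros w = length (filter Not w)"

lemma num_zeros_simps [simp]:
  "num_zeros [] = 0"
  "num_zeros (x # xs) = (if x then 0 else 1) + num_zeros xs"
  "num_zeros (xs @ ys) = num_zeros xs + num_zeros ys"
  by (auto simp: num_zeros_def)

lemma num_ones_simps [simp]:
  "num_ones [] = 0"
  "num_ones (x # xs) = (if x then 1 else 0) + num_ones xs"
  "num_ones (xs @ ys) = num_ones xs + num_ones ys"
  by (auto simp: num_ones_def)

lemma num_zeros_evo_step [simp]: "num_zeros (evo_step w) = num_zeros w"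
  and num_ones_evo_step [simp]: "num_ones (evo_step w) = num_ones w"
  by (induction w rule: evo_step.induct) auto

lemma num_zeros_take_Suc:
  "m < length w \<Longrightarrow> num_zeros (take (Suc m) w) = num_zeros (take m w) + (if w ! m then 0 else 1)"
  by (simp add: take_Suc_conv_app_nth)

lemma num_ones_drop:
  "m < length w \<Longrightarrow> num_ones (drop m w) = num_ones (drop (Suc m) w) + (if w ! m then 1 else 0)"
  by (simp add: Cons_nth_drop_Suc[symmetric])

definition cut_weight :: "bool list \<Rightarrow> nat \<Rightarrow> nat" where
  "cut_weight w m = num_zeros (take m w) + num_ones (drop m w)"

definition proper_cut :: "bool list \<Rightarrow> nat \<Rightarrow> bool" where
  "proper_cut w m \<longleftrightarrow> 0 < num_zeros (take m w) \<and> 0 < num_ones (drop m w)"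

definition ascent_at :: "bool list \<Rightarrow> nat \<Rightarrow> bool" where
  "ascent_at w m \<longleftrightarrow> 0 < m \<and> m < length w \<and> \<not> w ! (m - 1) \<and> w ! m"

lemma proper_cut_less_length: "proper_cut w m \<Longrightarrow> m < length w"
  by (cases "m < length w") (auto simp: proper_cut_def)

lemma proper_cut_weight: "proper_cut w m \<Longrightarrow> 2 \<le> cut_weight w m"
  by (simp add: proper_cut_def cut_weight_def)

lemma cut_weight_le_length: "cut_weight w m \<le> length w"
proof -
  have "cut_weight w m \<le> length (take m w) + length (drop m w)"
    unfolding cut_weight_def num_zeros_def num_ones_def by (intro add_mono length_filter_le)
  then show ?thesis by simp
qed

lemma ascent_decomp:
  assumes "ascent_at w m"
  shows "w = take (m - 1) w @ False # True # drop (Suc m) w"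
proof -
  from assms have m: "0 < m" "m < length w" and "\<not> w ! (m - 1)" "w ! m"
    by (auto simp: ascent_at_def)
  have "drop (m - 1) w = w ! (m - 1) # drop (Suc (m - 1)) w"
    by (rule Cons_nth_drop_Suc[symmetric]) (use m in simp)
  also have "drop (Suc (m - 1)) w = w ! m # drop (Suc m) w"
    using m by (simp add: Cons_nth_drop_Suc)
  finally have "w = take (m - 1) w @ w ! (m - 1) # w ! m # drop (Suc m) w"
    by (metis append_take_drop_id)
  then show ?thesis using \<open>\<not> w ! (m - 1)\<close> \<open>w ! m\<close> by simp
qed

lemma evo_step_split_cut:
  assumes "m \<le> length w" "\<not> ascent_at w m"
  shows "evo_step w = evo_step (take m w) @ evo_step (drop m w)"
proof -
  have "\<not> (take m w \<noteq> [] \<and> drop m w \<noteq> [] \<and> \<not> last (take m w) \<and> hd (drop m w))"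
  proof
    assume h: "take m w \<noteq> [] \<and> drop m w \<noteq> [] \<and> \<not> last (take m w) \<and> hd (drop m w)"
    then have m: "0 < m" "m < length w" by auto
    moreover have "last (take m w) = w ! (m - 1)"
      using h m by (subst last_conv_nth) (auto simp: min_def)
    moreover have "hd (drop m w) = w ! m" using m by (simp add: hd_drop_conv_nth)
    ultimately show False using assms h by (auto simp: ascent_at_def)
  qed
  then show ?thesis using evo_step_append[of "take m w" "drop m w"] by simp
qed

lemma non_ascent_cut_evo_step:
  assumes "m \<le> length w" "\<not> ascent_at w m"
  shows "proper_cut (evo_step w) m = proper_cut w m"
    and "cut_weight (evo_step w) m = cut_weight w m"
proof -
  have "take m (evo_step w) = evo_step (take m w)" "drop m (evo_step w) = evo_step (drop m w)"
    using evo_step_split_cut[OF assms] assms(1)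
    by (metis append_eq_conv_conj evo_step_length length_take min_absorb2)+
  then show "proper_cut (evo_step w) m = proper_cut w m"
    and "cut_weight (evo_step w) m = cut_weight w m"
    by (simp_all add: proper_cut_def cut_weight_def)
qed

text \<open>A cut inside a 01 loses that 0 on the left and that 1 on the right.\<close>
lemma ascent_cut_evo_step:
  assumes "ascent_at w m"
  shows "cut_weight (evo_step w) m + 2 = cut_weight w m"
proof -
  let ?A = "take (m - 1) w" and ?B = "drop (Suc m) w"
  have len: "length ?A = m - 1" "0 < m" using assms by (auto simp: ascent_at_def)
  have w: "w = (?A @ [False]) @ True # ?B" using ascent_decomp[OF assms] by simp
  have "evo_step w = evo_step (?A @ False # True # ?B)" using ascent_decomp[OF assms] by metis
  also have "\<dots> = (evo_step ?A @ [True]) @ False # evo_step ?B"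
    by (subst evo_step_append) simp_all
  finally have ew: "evo_step w = (evo_step ?A @ [True]) @ False # evo_step ?B" .
  have "cut_weight (evo_step w) m = num_zeros ?A + num_ones ?B"
    unfolding ew cut_weight_def using len by simp
  moreover have "cut_weight w m = num_zeros ?A + num_ones ?B + 2"
    by (subst (1 2) w) (use len in \<open>simp add: cut_weight_def\<close>)
  ultimately show ?thesis by simp
qed

lemma ascent_is_proper:
  assumes "ascent_at w m"
  shows "proper_cut w m"
proof -
  from assms have m: "0 < m" "m < length w" "\<not> w ! (m - 1)" "w ! m"
    by (auto simp: ascent_at_def)
  then have "num_zeros (take m w) = num_zeros (take (m - 1) w) + 1"
    using num_zeros_take_Suc[of "m - 1" w] by simp
  moreover have "num_ones (drop m w) = num_ones (drop (Suc m) w) + 1"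
    using num_ones_drop[of m w] m by simp
  ultimately show ?thesis by (simp add: proper_cut_def)
qed

lemma proper_cut_evo_step: "proper_cut (evo_step w) m \<Longrightarrow> proper_cut w m"
  using proper_cut_less_length[of "evo_step w" m] non_ascent_cut_evo_step(1)[of m w]
    ascent_is_proper[of w m] by fastforce

text \<open>A proper cut of maximal weight sits inside a 01: otherwise moving it one
  position to the left or to the right would increase the weight.\<close>
lemma maximal_cut_is_ascent:
  assumes cut: "proper_cut w m"
    and max: "\<And>m'. proper_cut w m' \<Longrightarrow> cut_weight w m' \<le> cut_weight w m"
  shows "ascent_at w m"
proof -
  have m: "m < length w" using proper_cut_less_length[OF cut] .
  have m0: "0 < m" using cut by (cases m) (auto simp: proper_cut_def)
  have "w ! m"
  proof (rule ccontr)
    assume "\<not> w ! m"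
    then have "proper_cut w (Suc m)" "cut_weight w (Suc m) = cut_weight w m + 1"
      using cut num_zeros_take_Suc[OF m] num_ones_drop[OF m]
      by (auto simp: proper_cut_def cut_weight_def)
    then show False using max[of "Suc m"] by simp
  qed
  moreover have "\<not> w ! (m - 1)"
  proof
    assume "w ! (m - 1)"
    then have "proper_cut w (m - 1)" "cut_weight w (m - 1) = cut_weight w m + 1"
      using cut m m0 num_zeros_take_Suc[of "m - 1" w] num_ones_drop[of "m - 1" w]
      by (auto simp: proper_cut_def cut_weight_def)
    then show False using max[of "m - 1"] by simp
  qed
  ultimately show ?thesis using m m0 by (simp add: ascent_at_def)
qed

text \<open>Weights are bounded by |w|, so a proper cut of maximal weight exists.\<close>
lemma exists_maximal_cut:
  assumes "proper_cut w m"
  obtains m0 where "proper_cut w m0"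
    and "\<And>m'. proper_cut w m' \<Longrightarrow> cut_weight w m' \<le> cut_weight w m0"
proof -
  have "\<forall>m'. proper_cut w m' \<longrightarrow> cut_weight w m' < Suc (length w)"
    by (simp add: cut_weight_le_length le_imp_less_Suc)
  then obtain m0 where "proper_cut w m0"
    and "\<forall>m'. proper_cut w m' \<longrightarrow> cut_weight w m' \<le> cut_weight w m0"
    using ex_has_greatest_nat[of "proper_cut w" m "cut_weight w"] assms by blast
  then show ?thesis by (intro that) auto
qed

text \<open>The two neighbours of a maximal cut weigh one less and are untouched by
  the step; unless the maximal weight is 2, one of them stays proper.\<close>
lemma maximal_cut_neighbour:
  assumes cut: "proper_cut w m"
    and max: "\<And>m'. proper_cut w m' \<Longrightarrow> cut_weight w m' \<le> cut_weight w m"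
    and heavy: "2 < cut_weight w m"
  shows "\<exists>m'. proper_cut (evo_step w) m' \<and> cut_weight (evo_step w) m' + 1 = cut_weight w m"
proof -
  have asc: "ascent_at w m" using maximal_cut_is_ascent[OF cut max] .
  then have p: "0 < m" "m < length w" "\<not> w ! (m - 1)" "w ! m" by (auto simp: ascent_at_def)
  note counts = num_zeros_take_Suc[of "m - 1" w] num_ones_drop[of "m - 1" w]
    num_zeros_take_Suc[of m w] num_ones_drop[of m w]
  have left: "cut_weight w (m - 1) + 1 = cut_weight w m"
    and right: "cut_weight w (Suc m) + 1 = cut_weight w m"
    using counts p by (simp_all add: cut_weight_def)
  have na: "\<not> ascent_at w (m - 1)" "\<not> ascent_at w (Suc m)"
    using p by (simp_all add: ascent_at_def)
  have "proper_cut w (m - 1) \<or> proper_cut w (Suc m)"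
  proof (rule ccontr)
    assume "\<not> ?thesis"
    then have "num_zeros (take (m - 1) w) = 0" "num_ones (drop (Suc m) w) = 0"
      using counts p by (auto simp: proper_cut_def)
    then show False using heavy counts p by (simp add: cut_weight_def)
  qed
  then show ?thesis
  proof
    assume "proper_cut w (m - 1)"
    then show ?thesis
      using non_ascent_cut_evo_step[OF _ na(1)] p left by (intro exI[of _ "m - 1"]) simp
  next
    assume "proper_cut w (Suc m)"
    then show ?thesis
      using non_ascent_cut_evo_step[OF _ na(2)] p right by (intro exI[of _ "Suc m"]) simp
  qed
qed

definition weights_bounded :: "bool list \<Rightarrow> nat \<Rightarrow> bool" where
  "weights_bounded w k \<longleftrightarrow> (\<forall>m. proper_cut w m \<longrightarrow> cut_weight w m \<le> Suc k)"

lemma weights_bounded_evo_step: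
  "weights_bounded (evo_step w) k \<longleftrightarrow> weights_bounded w (Suc k)"
proof
  assume after: "weights_bounded (evo_step w) k"
  show "weights_bounded w (Suc k)"
    unfolding weights_bounded_def
  proof (intro allI impI)
    fix m assume "proper_cut w m"
    then obtain m0 where cut: "proper_cut w m0"
      and max: "\<And>m'. proper_cut w m' \<Longrightarrow> cut_weight w m' \<le> cut_weight w m0"
      using exists_maximal_cut by metis
    have "cut_weight w m0 \<le> Suc (Suc k)"
    proof (cases "2 < cut_weight w m0")
      case True
      then show ?thesis
        using maximal_cut_neighbour[OF cut max] after by (force simp: weights_bounded_def)
    qed simp
    then show "cut_weight w m \<le> Suc (Suc k)" using max[OF \<open>proper_cut w m\<close>] by simp
  qed
next
  assume before: "weights_bounded w (Suc k)"
  show "weights_bounded (evo_step w) k"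
    unfolding weights_bounded_def
  proof (intro allI impI)
    fix m assume cut': "proper_cut (evo_step w) m"
    have cut: "proper_cut w m" using proper_cut_evo_step[OF cut'] .
    have bound: "cut_weight w m \<le> Suc (Suc k)" using before cut by (simp add: weights_bounded_def)
    show "cut_weight (evo_step w) m \<le> Suc k"
    proof (cases "ascent_at w m")
      case True
      then show ?thesis using ascent_cut_evo_step bound by fastforce
    next
      case False
      text \<open>A cut of weight k + 2 would be maximal, hence an ascent.\<close>
      have "cut_weight w m \<noteq> Suc (Suc k)"
        using maximal_cut_is_ascent[OF cut] before False by (force simp: weights_bounded_def)
      then show ?thesis
        using non_ascent_cut_evo_step(2)[OF _ False] proper_cut_less_length[OF cut] bound
        by simp
    qed
  qed
qed

text \<open>Stable words are exactly those without proper cuts: both properties satisfy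
  the same recursion along the first letter.\<close>
lemma is_stable_Cons:
  "is_stable (x # w) \<longleftrightarrow> (if x then is_stable w else num_ones w = 0)"
proof (cases x)
  case True
  have "is_stable (True # w) \<longleftrightarrow> is_stable w"
  proof
    assume "is_stable (True # w)"
    then obtain a b where "True # w = replicate a True @ replicate b False"
      by (auto simp: is_stable_def)
    then have "w = replicate (a - 1) True @ replicate b False" by (cases a; cases b) auto
    then show "is_stable w" unfolding is_stable_def by blast
  next
    assume "is_stable w"
    then obtain a b where "w = replicate a True @ replicate b False" by (auto simp: is_stable_def)
    then have "True # w = replicate (Suc a) True @ replicate b False" by simp
    then show "is_stable (True # w)" unfolding is_stable_def by blast
  qed
  then show ?thesis using True by simp
next
  case False
  have all_false: "num_ones w = 0 \<longleftrightarrow> w = replicate (length w) False"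
    by (metis (full_types) filter_False filter_empty_conv id_apply in_set_replicate
        length_0_conv num_ones_def replicate_length_same)
  have "is_stable (False # w) \<longleftrightarrow> w = replicate (length w) False"
  proof
    assume "is_stable (False # w)"
    then obtain a b where "False # w = replicate a True @ replicate b False"
      by (auto simp: is_stable_def)
    then show "w = replicate (length w) False" by (cases a; cases b) auto
  next
    assume "w = replicate (length w) False"
    then have "False # w = replicate 0 True @ replicate (Suc (length w)) False" by simp
    then show "is_stable (False # w)" unfolding is_stable_def by blast
  qed
  then show ?thesis using False all_false by simp
qed

lemma proper_cut_Cons:
  "(\<exists>m. proper_cut (x # w) m) \<longleftrightarrow> (if x then \<exists>m. proper_cut w m else 0 < num_ones w)"
proof
  assume "\<exists>m. proper_cut (x # w) m"
  then obtain m where cut: "proper_cut (x # w) m" by blast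
  then obtain k where k: "m = Suc k" by (cases m) (auto simp: proper_cut_def)
  have "num_ones (drop k w) \<le> num_ones w"
    by (metis append_take_drop_id le_add2 num_ones_simps(3))
  then show "if x then \<exists>m. proper_cut w m else 0 < num_ones w"
    using cut k by (auto simp: proper_cut_def)
next
  assume h: "if x then \<exists>m. proper_cut w m else 0 < num_ones w"
  show "\<exists>m. proper_cut (x # w) m"
  proof (cases x)
    case True
    then obtain k where "proper_cut w k" using h by auto
    then have "proper_cut (x # w) (Suc k)" using True by (simp add: proper_cut_def)
    then show ?thesis by blast
  next
    case False
    then have "proper_cut (x # w) 1" using h by (simp add: proper_cut_def)
    then show ?thesis by blast
  qed
qed

lemma is_stable_iff_no_proper_cut: "is_stable w \<longleftrightarrow> \<not> (\<exists>m. proper_cut w m)"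
proof (induction w)
  case Nil
  have "is_stable []" unfolding is_stable_def by (metis append_Nil replicate_0)
  then show ?case by (simp add: proper_cut_def)
next
  case (Cons x w)
  then show ?case by (simp add: is_stable_Cons proper_cut_Cons)
qed

lemma is_stable_iff_weights_bounded_0: "is_stable w \<longleftrightarrow> weights_bounded w 0"
  using proper_cut_weight by (fastforce simp: is_stable_iff_no_proper_cut weights_bounded_def)

lemma is_stable_iterate: "is_stable ((evo_step ^^ k) w) \<longleftrightarrow> weights_bounded w k"
proof (induction k arbitrary: w)
  case 0
  then show ?case by (simp add: is_stable_iff_weights_bounded_0)
next
  case (Suc k)
  have "(evo_step ^^ Suc k) w = (evo_step ^^ k) (evo_step w)" by (simp only: funpow_Suc_right comp_apply)
  then show ?case using Suc weights_bounded_evo_step by simp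
qed

lemma card_zeros_before:
  "p \<le> length w \<Longrightarrow> card {q. q < p \<and> \<not> w ! q} = num_zeros (take p w)"
  unfolding num_zeros_def length_filter_conv_card by (rule arg_cong[where f = card]) auto

lemma card_ones_from: "card {p. m \<le> p \<and> p < length w \<and> w ! p} = num_ones (drop m w)"
proof -
  have "num_ones (drop m w) = card {i. i < length w - m \<and> w ! (m + i)}"
    unfolding num_ones_def length_filter_conv_card by (rule arg_cong[where f = card]) auto
  also have "\<dots> = card ((+) m ` {i. i < length w - m \<and> w ! (m + i)})"
    by (simp add: card_image)
  also have "(+) m ` {i. i < length w - m \<and> w ! (m + i)} = {p. m \<le> p \<and> p < length w \<and> w ! p}"
  proof (rule set_eqI, rule iffI)
    fix p assume "p \<in> {p. m \<le> p \<and> p < length w \<and> w ! p}"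
    then show "p \<in> (+) m ` {i. i < length w - m \<and> w ! (m + i)}"
      by (auto intro!: image_eqI[where x = "p - m"])
  qed auto
  finally show ?thesis by simp
qed

lemma num_zeros_take_mono: "p \<le> q \<Longrightarrow> num_zeros (take p w) \<le> num_zeros (take q w)"
  by (metis le_add1 le_add_diff_inverse num_zeros_simps(3) take_add)

lemma zeros_count: "length w - num_ones w = num_zeros w"
  using sum_length_filter_compl[of id w] by (simp add: num_ones_def num_zeros_def comp_def)

text \<open>Every cell (i, j) of Y(w) lies weakly below the corner of some proper cut:
  cut just after the i-th 0.\<close>
lemma young_cell_below_cut:
  assumes "(i, j) \<in> young_of w"
  shows "\<exists>m. proper_cut w m \<and> i + j \<le> cut_weight w m"
proof -
  have ij: "1 \<le> i" "i \<le> num_zeros w" "1 \<le> j" "j \<le> ones_after_zero w i"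
    using assms zeros_count[of w] by (auto simp: young_of_def)
  define m where "m = (LEAST p. i \<le> num_zeros (take p w))"
  have "i \<le> num_zeros (take (length w) w)" using ij by simp
  then have i_le: "i \<le> num_zeros (take m w)"
    unfolding m_def by (rule LeastI)
  have least: "\<And>p. i \<le> num_zeros (take p w) \<Longrightarrow> m \<le> p"
    unfolding m_def by (rule Least_le)
  have "{p. p < length w \<and> w ! p \<and> i \<le> card {q. q < p \<and> \<not> w ! q}}
        \<subseteq> {p. m \<le> p \<and> p < length w \<and> w ! p}"
    using card_zeros_before least by auto
  then have "ones_after_zero w i \<le> num_ones (drop m w)"
    unfolding ones_after_zero_def card_ones_from[symmetric] by (rule card_mono[rotated]) simp
  then have "j \<le> num_ones (drop m w)" using ij by simp
  then show ?thesis using i_le ij by (intro exI[of _ m]) (simp add: proper_cut_def cut_weight_def)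
qed

lemma cut_corner_in_young:
  assumes cut: "proper_cut w m"
  shows "(num_zeros (take m w), num_ones (drop m w)) \<in> young_of w"
proof -
  let ?i = "num_zeros (take m w)"
  have m: "m < length w" using proper_cut_less_length[OF cut] .
  have "{p. m \<le> p \<and> p < length w \<and> w ! p}
        \<subseteq> {p. p < length w \<and> w ! p \<and> ?i \<le> card {q. q < p \<and> \<not> w ! q}}"
    using card_zeros_before num_zeros_take_mono by fastforce
  then have "num_ones (drop m w) \<le> ones_after_zero w ?i"
    unfolding ones_after_zero_def card_ones_from[symmetric] by (rule card_mono[rotated]) simp
  moreover have "?i \<le> num_zeros w" using num_zeros_take_mono[of m "length w" w] m by simp
  ultimately show ?thesis using cut zeros_count[of w] by (simp add: young_of_def proper_cut_def)
qed

lemma young_of_finite: "finite (young_of w)"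
proof (rule finite_subset)
  have "\<And>i. ones_after_zero w i \<le> card {..<length w}"
    unfolding ones_after_zero_def by (rule card_mono) auto
  then show "young_of w \<subseteq> {..length w} \<times> {..length w}"
    by (auto simp: young_of_def intro: order_trans)
qed simp

lemma Depth_le_iff:
  assumes "finite Y"
  shows "Depth Y \<le> k \<longleftrightarrow> (\<forall>(i, j) \<in> Y. i + j - 1 \<le> k)"
  using assms by (auto simp: Depth_def)

lemma Depth_young_le_iff: "Depth (young_of w) \<le> k \<longleftrightarrow> weights_bounded w k"
proof -
  have "Depth (young_of w) \<le> k \<longleftrightarrow> (\<forall>(i, j) \<in> young_of w. i + j \<le> Suc k)"
    unfolding Depth_le_iff[OF young_of_finite]
    by (intro ball_cong) (auto simp: young_of_def)
  also have "\<dots> \<longleftrightarrow> weights_bounded w k"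
  proof
    assume cells: "\<forall>(i, j) \<in> young_of w. i + j \<le> Suc k"
    show "weights_bounded w k"
      unfolding weights_bounded_def
    proof (intro allI impI)
      fix m assume "proper_cut w m"
      then show "cut_weight w m \<le> Suc k"
        using cells cut_corner_in_young[of w m] by (auto simp: cut_weight_def)
    qed
  next
    assume bounded: "weights_bounded w k"
    show "\<forall>(i, j) \<in> young_of w. i + j \<le> Suc k"
    proof (intro ballI, clarify)
      fix i j assume "(i, j) \<in> young_of w"
      then obtain m where "proper_cut w m" "i + j \<le> cut_weight w m"
        using young_cell_below_cut by blast
      then show "i + j \<le> Suc k" using bounded by (auto simp: weights_bounded_def)
    qed
  qed
  finally show ?thesis .
qed

theorem proposition2p7:
  fixes \<omega> :: "bool list"
  shows "stab_time \<omega> = Depth (young_of \<omega>)"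
proof -
  have "stab_time \<omega> = (LEAST k. weights_bounded \<omega> k)"
    by (simp add: stab_time_def is_stable_iterate)
  also have "\<dots> = (LEAST k. Depth (young_of \<omega>) \<le> k)"
    by (simp add: Depth_young_le_iff)
  also have "\<dots> = Depth (young_of \<omega>)"
    by (rule Least_equality) simp_all
  finally show ?thesis .
qed

end
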